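(* Let $\psi_1,\dots,\psi_N\in\mathbb{C}^{2^n}$ be unit vectors and $Y_1,\dots,Y_N\in\{-1,1\}$. Let $p\in[0,1/4)$ and let $C_1,\dots,C_N$ be i.i.d., independent of $(\psi_{1:N},Y_{1:N})$, with $\mathbb{P}\{C_i=0\}=1-3p$ and $\mathbb{P}\{C_i=j\}=p$ for $j=1,2,3$. Let $V_i=V_i^1\otimes\cdots\otimes V_i^n$ with $V_i^1=\sigma_{C_i}$ and $V_i^k$ ($k\ge2$) arbitrary (possibly random) $2\times 2$ unitaries, and set $\tilde\psi_i=V_i\psi_i$. Let $\ell:\mathbb{R}\to[0,\infty)$ be convex, monotonically nonincreasing, with $\ell(0)=1$. For a parametrized circuit $W(\theta)=W_1(\theta_1)\otimes\cdots\otimes W_n(\theta_n)$ ($\theta\in\mathbb{R}^k$, each $W_r(\theta_r)$ a $2\times2$ unitary) define $$m_\theta(\psi)=\langle\psi|W(\theta)^\dagger M_1W(\theta)|\psi\rangle-\tfrac12,\quad \hat R_N(\theta)=\frac1N\sum_{i=1}^N\ell\big(m_\theta(\psi_i)Y_i\big),\quad \tilde R_N(\theta)=\frac1N\sum_{i=1}^N\ell\big(m_\theta(\tilde\psi_i)Y_i\big),$$ and $\hat P_N(\theta)=\frac1N\sum_{i=1}^N\frac14\sum_{j=0}^{3}\ell\big(m_\theta((\sigma_j\otimes I_{2^{n-1}})\psi_i)\,Y_i\big)$. Then with $\lambda=\frac{4p}{1-4p}$, $$\mathbb{E}\big[\tilde R_N(\theta)\,\big|\,\psi_{1:N},Y_{1:N}\big]=(1-4p)\big[\hat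 R_N(\theta)+\lambda\,\hat P_N(\theta)\big],$$ and $$\hat P_N(\theta)\ \ge\ \frac1N\sum_{i=1}^N\frac{\ell\big(\tfrac13|m_\theta(\psi_i)|\big)+\ell\big(-\tfrac13|m_\theta(\psi_i)|\big)}{2}.$$
   Context: $\sigma_0=I_2$, $\sigma_1=\begin{pmatrix}0&1\\1&0\end{pmatrix}$, $\sigma_2=\begin{pmatrix}0&-i\\i&0\end{pmatrix}$, $\sigma_3=\begin{pmatrix}1&0\\0&-1\end{pmatrix}$ (Pauli matrices). $M_1=\begin{pmatrix}0&0\\0&1\end{pmatrix}\otimes I_{2^{n-1}}$, so $m_\theta(\psi)$ is the probability of measuring $|1\rangle$ on the first qubit of $W(\theta)\psi$, minus $1/2$. The conditional expectation is over $C_1,\dots,C_N$ (and any randomness in the $V_i^k$, $k\ge 2$). *)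

theory Defs
  imports "HOL-Probability.Probability" "Jordan_Normal_Form.Matrix"
begin

definition adj :: "complex mat \<Rightarrow> complex mat" where
  "adj A = mat (dim_col A) (dim_row A) (\<lambda>(i,j). cnj (A $$ (j,i)))"

definition unitary_mat :: "nat \<Rightarrow> complex mat \<Rightarrow> bool" where
  "unitary_mat d A \<longleftrightarrow> A \<in> carrier_mat d d \<and> adj A * A = 1\<^sub>m d \<and> A * adj A = 1\<^sub>m d"

(* Kronecker (tensor) product; the left factor is the most significant index *)
definition kron :: "complex mat \<Rightarrow> complex mat \<Rightarrow> complex mat" where
  "kron A B = mat (dim_row A * dim_row B) (dim_col A * dim_col B)
     (\<lambda>(i,j). A $$ (i div dim_row B, j div dim_col B) * B $$ (i mod dim_row B, j mod dim_col B))"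

definition tensor_list :: "complex mat list \<Rightarrow> complex mat" where
  "tensor_list Us = foldr kron Us (1\<^sub>m 1)"

(* Pauli matrices sigma_0 = I, sigma_1, sigma_2, sigma_3 (index > 3 : identity, never used a.s.) *)
definition pauli :: "nat \<Rightarrow> complex mat" where
  "pauli j = (if j = 1 then mat_of_rows_list 2 [[0, 1], [1, 0]]
              else if j = 2 then mat_of_rows_list 2 [[0, -\<i>], [\<i>, 0]]
              else if j = 3 then mat_of_rows_list 2 [[1, 0], [0, -1]]
              else 1\<^sub>m 2)"

definition M1 :: "nat \<Rightarrow> complex mat" where
  "M1 n = kron (mat_of_rows_list 2 [[0, 0], [0, 1]]) (1\<^sub>m (2 ^ (n - 1)))"

definition mval :: "nat \<Rightarrow> complex mat \<Rightarrow> complex vec \<Rightarrow> real" where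
  "mval n W \<psi> = Re (((adj W * M1 n * W) *\<^sub>v \<psi>) \<bullet>c \<psi>) - 1/2"

definition Rhat :: "(real \<Rightarrow> real) \<Rightarrow> nat \<Rightarrow> complex mat \<Rightarrow> nat \<Rightarrow> (nat \<Rightarrow> complex vec) \<Rightarrow> (nat \<Rightarrow> real) \<Rightarrow> real" where
  "Rhat loss n W N \<psi> Y = (1 / real N) * (\<Sum>i = 1..N. loss (mval n W (\<psi> i) * Y i))"

definition Phat :: "(real \<Rightarrow> real) \<Rightarrow> nat \<Rightarrow> complex mat \<Rightarrow> nat \<Rightarrow> (nat \<Rightarrow> complex vec) \<Rightarrow> (nat \<Rightarrow> real) \<Rightarrow> real" where
  "Phat loss n W N \<psi> Y = (1 / real N) * (\<Sum>i = 1..N. (1/4) *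
      (\<Sum>j = 0..3. loss (mval n W (kron (pauli j) (1\<^sub>m (2 ^ (n - 1))) *\<^sub>v \<psi> i) * Y i)))"

end

theory Submission
  imports Defs
begin

text \<open>
  The observable \<open>W(\<theta>)\<^sup>\<dagger> M\<^sub>1 W(\<theta>)\<close> equals \<open>A \<otimes> I\<close> with \<open>A = W\<^sub>1\<^sup>\<dagger> |1\<rangle>\<langle>1| W\<^sub>1\<close>: it acts on the
  first qubit only, so the unitaries applied to qubits \<open>2, ..., n\<close> do not change the margin
  \<open>m\<^sub>\<theta>\<close>. Conditionally on the data, the expected loss of a noisy sample is then the mixture of
  the losses at \<open>\<sigma>\<^sub>j \<psi>\<close> with weights \<open>1 - 3p, p, p, p\<close>, which rearranges into the first claim.
  For the second, Pauli twirling gives \<open>\<Sum>\<^sub>j \<sigma>\<^sub>j A \<sigma>\<^sub>j = 2 tr(A) I = 2 I\<close>, so the four margins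
  \<open>m\<^sub>\<theta>(\<sigma>\<^sub>j \<psi>)\<close> sum to zero, and convexity bounds their mean loss from below by the
  symmetrised loss at \<open>\<plusminus>|m\<^sub>\<theta>(\<psi>)|/3\<close>.
\<close>

lemma sum_lessThan_mult_div_mod:
  fixes b d :: nat assumes "d > 0"
  shows "(\<Sum>k<b*d. g (k div d) (k mod d)) = (\<Sum>k1<b. \<Sum>k2<d. g k1 k2)"
proof -
  have "(\<Sum>k<b*d. g (k div d) (k mod d)) = (\<Sum>(k1,k2)\<in>{..<b}\<times>{..<d}. g k1 k2)"
  proof (rule sum.reindex_bij_witness[where i="\<lambda>(k1,k2). k1*d+k2" and j="\<lambda>k. (k div d, k mod d)"])
    fix k assume "k \<in> {..<b*d}"
    then show "(k div d, k mod d) \<in> {..<b}\<times>{..<d}"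
      using assms by (auto simp: less_mult_imp_div_less)
  next
    fix a assume "a \<in> {..<b}\<times>{..<d}"
    then obtain k1 k2 where a: "a = (k1, k2)" "Suc k1 \<le> b" "k2 < d" by auto
    then have "k1*d + k2 < Suc k1 * d" by simp
    also have "\<dots> \<le> b*d" using a(2) by (rule mult_right_mono) simp
    finally show "(case a of (k1,k2) \<Rightarrow> k1*d+k2) \<in> {..<b*d}" using a by simp
  qed (use assms in auto)
  also have "\<dots> = (\<Sum>k1<b. \<Sum>k2<d. g k1 k2)" by (simp add: sum.cartesian_product)
  finally show ?thesis .
qed

lemma mod_less_of_less_mult: "(i::nat) < a * c \<Longrightarrow> i mod c < c"
  by (metis mod_less_divisor mult_0_right neq0_conv not_less_zero)

lemma dim_kron[simp]:
  "dim_row (kron A B) = dim_row A * dim_row B" "dim_col (kron A B) = dim_col A * dim_col B"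
  by (auto simp: kron_def)

lemma index_kron[simp]: "i < dim_row A * dim_row B \<Longrightarrow> j < dim_col A * dim_col B \<Longrightarrow>
  kron A B $$ (i,j) = A $$ (i div dim_row B, j div dim_col B) * B $$ (i mod dim_row B, j mod dim_col B)"
  by (auto simp: kron_def)

lemma kron_carrier_mat:
  "A \<in> carrier_mat a b \<Longrightarrow> B \<in> carrier_mat c d \<Longrightarrow> kron A B \<in> carrier_mat (a*c) (b*d)"
  by auto

lemma dim_adj[simp]: "dim_row (adj A) = dim_col A" "dim_col (adj A) = dim_row A"
  by (auto simp: adj_def)

lemma index_adj[simp]: "i < dim_col A \<Longrightarrow> j < dim_row A \<Longrightarrow> adj A $$ (i,j) = cnj (A $$ (j,i))"
  by (auto simp: adj_def)

lemma adj_one_mat[simp]: "adj (1\<^sub>m n) = 1\<^sub>m n"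
  by (rule eq_matI) auto

lemma adj_kron: "adj (kron A B) = kron (adj A) (adj B)"
  by (rule eq_matI) (auto simp: less_mult_imp_div_less mod_less_of_less_mult)

lemma kron_add_left:
  "A \<in> carrier_mat a b \<Longrightarrow> B \<in> carrier_mat a b \<Longrightarrow> kron (A + B) C = kron A C + kron B C"
  by (rule eq_matI) (auto simp: less_mult_imp_div_less distrib_right)

lemma kron_smult_left: "kron (c \<cdot>\<^sub>m A) B = c \<cdot>\<^sub>m kron A B"
  by (rule eq_matI) (auto simp: less_mult_imp_div_less)

lemma kron_one_mat: "kron (1\<^sub>m a) (1\<^sub>m b) = 1\<^sub>m (a*b)"
proof (rule eq_matI)
  fix i j assume "i < dim_row (1\<^sub>m (a*b) :: complex mat)" "j < dim_col (1\<^sub>m (a*b) :: complex mat)"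
  then have i: "i < a*b" and j: "j < a*b" by auto
  have "(i div b = j div b \<and> i mod b = j mod b) = (i = j)"
    by (metis div_mult_mod_eq)
  then show "kron (1\<^sub>m a) (1\<^sub>m b) $$ (i, j) = 1\<^sub>m (a * b) $$ (i, j)"
    using i j by (auto simp: less_mult_imp_div_less mod_less_of_less_mult)
qed auto

lemma kron_mult:
  assumes A: "A \<in> carrier_mat a b" and B: "B \<in> carrier_mat c d"
    and C: "C \<in> carrier_mat b e" and D: "D \<in> carrier_mat d f" and "d > 0"
  shows "kron A B * kron C D = kron (A * C) (B * D)"
proof (rule eq_matI)
  fix i j assume "i < dim_row (kron (A*C) (B*D))" "j < dim_col (kron (A*C) (B*D))"
  then have i: "i < a*c" and j: "j < e*f" using A B C D by auto
  have "(kron A B * kron C D) $$ (i,j) = (\<Sum>k<b*d. (A $$ (i div c, k div d) * B $$ (i mod c, k mod d)) *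
        (C $$ (k div d, j div f) * D $$ (k mod d, j mod f)))"
    using A B C D i j by (auto simp: scalar_prod_def atLeast0LessThan intro!: sum.cong)
  also have "\<dots> = (\<Sum>k1<b. \<Sum>k2<d. (A $$ (i div c, k1) * B $$ (i mod c, k2)) *
        (C $$ (k1, j div f) * D $$ (k2, j mod f)))"
    by (rule sum_lessThan_mult_div_mod) fact
  also have "\<dots> = (\<Sum>k1<b. A $$ (i div c, k1) * C $$ (k1, j div f)) *
                   (\<Sum>k2<d. B $$ (i mod c, k2) * D $$ (k2, j mod f))"
    by (simp add: sum_product mult_ac)
  also have "\<dots> = kron (A*C) (B*D) $$ (i,j)"
    using A B C D i j by (simp add: scalar_prod_def atLeast0LessThan
        less_mult_imp_div_less mod_less_of_less_mult)
  finally show "(kron A B * kron C D) $$ (i,j) = kron (A*C) (B*D) $$ (i,j)" .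
qed (use A B C D in auto)

lemma unitary_mat_one: "unitary_mat d (1\<^sub>m d)"
  by (simp add: unitary_mat_def)

lemma unitary_mat_kron:
  assumes "unitary_mat a A" "unitary_mat b B" "b > 0"
  shows "unitary_mat (a*b) (kron A B)"
proof -
  have A: "A \<in> carrier_mat a a" "adj A * A = 1\<^sub>m a" "A * adj A = 1\<^sub>m a"
   and B: "B \<in> carrier_mat b b" "adj B * B = 1\<^sub>m b" "B * adj B = 1\<^sub>m b"
    using assms unfolding unitary_mat_def by auto
  have "adj A \<in> carrier_mat a a" "adj B \<in> carrier_mat b b" using A B by auto
  with A B \<open>b > 0\<close> show ?thesis
    unfolding unitary_mat_def adj_kron by (simp add: kron_mult kron_one_mat kron_carrier_mat)
qed

lemma unitary_mat_tensor_list: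
  "(\<And>U. U \<in> set Us \<Longrightarrow> unitary_mat 2 U) \<Longrightarrow> unitary_mat (2 ^ length Us) (tensor_list Us)"
proof (induction Us)
  case Nil
  show ?case by (simp add: tensor_list_def unitary_mat_def)
next
  case (Cons U Us)
  have "unitary_mat (2 * 2 ^ length Us) (kron U (tensor_list Us))"
    by (rule unitary_mat_kron) (use Cons in auto)
  then show ?case by (simp add: tensor_list_def)
qed

lemma unitary_mat_tensor_list_tail:
  assumes "\<And>k. k \<in> {2..n} \<Longrightarrow> unitary_mat 2 (U k)"
  shows "unitary_mat (2 ^ (n - 1)) (tensor_list (map U [2..<n+1]))"
proof -
  from assms have "unitary_mat (2 ^ length (map U [2..<n+1])) (tensor_list (map U [2..<n+1]))"
    by (intro unitary_mat_tensor_list) auto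
  then show ?thesis by (simp del: upt_Suc)
qed

lemma tensor_list_upt_split_first:
  "n \<ge> 1 \<Longrightarrow> tensor_list (map U [1..<n+1]) = kron (U 1) (tensor_list (map U [2..<n+1]))"
  using upt_conv_Cons[of 1 "n+1"] by (simp add: tensor_list_def numeral_2_eq_2 del: upt_Suc)

lemma cscalar_prod_mult_mat_vec_adj:
  assumes A: "A \<in> carrier_mat r c" and x: "x \<in> carrier_vec r" and y: "y \<in> carrier_vec c"
  shows "x \<bullet>c (A *\<^sub>v y) = (adj A *\<^sub>v x) \<bullet>c y"
proof -
  have "x \<bullet>c (A *\<^sub>v y) = (\<Sum>i<r. \<Sum>j<c. x $ i * cnj (A $$ (i,j)) * cnj (y $ j))"
    using A x y by (simp add: scalar_prod_def atLeast0LessThan sum_distrib_left mult_ac)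
  also have "\<dots> = (\<Sum>j<c. \<Sum>i<r. x $ i * cnj (A $$ (i,j)) * cnj (y $ j))"
    by (rule sum.swap)
  also have "\<dots> = (\<Sum>j<c. (\<Sum>i<r. cnj (A $$ (i,j)) * x $ i) * cnj (y $ j))"
    by (simp add: sum_distrib_right sum_distrib_left mult_ac)
  also have "\<dots> = (adj A *\<^sub>v x) \<bullet>c y"
    using A x y by (simp add: scalar_prod_def atLeast0LessThan)
  finally show ?thesis .
qed

lemma cscalar_prod_conjugate_observable:
  assumes K: "K \<in> carrier_mat m m" and U: "U \<in> carrier_mat m m" and x: "x \<in> carrier_vec m"
  shows "(K *\<^sub>v (U *\<^sub>v x)) \<bullet>c (U *\<^sub>v x) = ((adj U * K * U) *\<^sub>v x) \<bullet>c x"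
proof -
  have aU: "adj U \<in> carrier_mat m m" using U by auto
  have "(adj U * K * U) *\<^sub>v x = (adj U * K) *\<^sub>v (U *\<^sub>v x)"
    by (rule assoc_mult_mat_vec[OF mult_carrier_mat[OF aU K] U x])
  also have "\<dots> = adj U *\<^sub>v (K *\<^sub>v (U *\<^sub>v x))"
    using aU K U x by (simp add: assoc_mult_mat_vec)
  finally have "(adj U * K * U) *\<^sub>v x = adj U *\<^sub>v (K *\<^sub>v (U *\<^sub>v x))" .
  moreover have "(K *\<^sub>v (U *\<^sub>v x)) \<bullet>c (U *\<^sub>v x) = (adj U *\<^sub>v (K *\<^sub>v (U *\<^sub>v x))) \<bullet>c x"
    by (rule cscalar_prod_mult_mat_vec_adj[OF U _ x]) (use K U x in simp)
  ultimately show ?thesis by simp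
qed

lemma kron_one_mat_conj:
  assumes U: "U \<in> carrier_mat a a" and V: "unitary_mat d V" and A: "A \<in> carrier_mat a a" and "d > 0"
  shows "adj (kron U V) * kron A (1\<^sub>m d) * kron U V = kron (adj U * A * U) (1\<^sub>m d)"
proof -
  have Vc: "V \<in> carrier_mat d d" "adj V * V = 1\<^sub>m d" using V unfolding unitary_mat_def by auto
  have aU: "adj U \<in> carrier_mat a a" and aV: "adj V \<in> carrier_mat d d" using U Vc by auto
  have "adj (kron U V) * kron A (1\<^sub>m d) = kron (adj U * A) (adj V)"
    unfolding adj_kron kron_mult[OF aU aV A one_carrier_mat \<open>d > 0\<close>] right_mult_one_mat[OF aV] ..
  also have "\<dots> * kron U V = kron (adj U * A * U) (adj V * V)"
    by (rule kron_mult[OF mult_carrier_mat[OF aU A] aV U Vc(1) \<open>d > 0\<close>])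
  finally show ?thesis using Vc by simp
qed

lemma cscalar_prod_kron_add_left:
  assumes A: "A \<in> carrier_mat a a" and B: "B \<in> carrier_mat a a" and x: "x \<in> carrier_vec (a*d)"
  shows "(kron (A + B) (1\<^sub>m d) *\<^sub>v x) \<bullet>c x
       = (kron A (1\<^sub>m d) *\<^sub>v x) \<bullet>c x + (kron B (1\<^sub>m d) *\<^sub>v x) \<bullet>c x"
proof -
  have kA: "kron A (1\<^sub>m d) \<in> carrier_mat (a*d) (a*d)" and kB: "kron B (1\<^sub>m d) \<in> carrier_mat (a*d) (a*d)"
    using A B by auto
  have "kron (A + B) (1\<^sub>m d) *\<^sub>v x = kron A (1\<^sub>m d) *\<^sub>v x + kron B (1\<^sub>m d) *\<^sub>v x"
    unfolding kron_add_left[OF A B] by (rule add_mult_distrib_mat_vec[OF kA kB x])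
  then show ?thesis
    using kA kB x by (simp add: add_scalar_prod_distrib[of _ "a*d"])
qed

lemma cscalar_prod_kron_smult_one:
  assumes x: "x \<in> carrier_vec (a*d)"
  shows "(kron (c \<cdot>\<^sub>m 1\<^sub>m a) (1\<^sub>m d) *\<^sub>v x) \<bullet>c x = c * (x \<bullet>c x)"
proof -
  have "(c \<cdot>\<^sub>m 1\<^sub>m (a*d)) *\<^sub>v x = c \<cdot>\<^sub>v x"
    using x by (intro eq_vecI) auto
  then show ?thesis using x by (simp add: kron_smult_left kron_one_mat)
qed

lemma pauli_carrier_mat: "pauli j \<in> carrier_mat 2 2"
  by (auto simp: pauli_def mat_of_rows_list_def)

lemma pauli_eq_one_mat: "j \<notin> {1, 2, 3} \<Longrightarrow> pauli j = 1\<^sub>m 2"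
  by (simp add: pauli_def)

lemma pauli_entries:
  "pauli 0 = mat 2 2 (\<lambda>(i,j). if i = j then 1 else 0)"
  "pauli 1 = mat 2 2 (\<lambda>(i,j). if i = j then 0 else 1)"
  "pauli 2 = mat 2 2 (\<lambda>(i,j). if i = j then 0 else if i = 0 then -\<i> else \<i>)"
  "pauli 3 = mat 2 2 (\<lambda>(i,j). if i = j then (if i = 0 then 1 else -1) else 0)"
  by (auto simp: pauli_def mat_of_rows_list_def less_2_cases_iff intro!: eq_matI)

lemma kron_pauli_zero_mult_mat_vec: "x \<in> carrier_vec (2 * d) \<Longrightarrow> kron (pauli 0) (1\<^sub>m d) *\<^sub>v x = x"
  by (simp add: pauli_eq_one_mat kron_one_mat)

lemma sum_lessThan_2: "(\<Sum>k\<in>{0..<2::nat}. f k) = f 0 + f 1"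
  by (simp add: numeral_2_eq_2)

lemma pauli_twirl:
  assumes "A \<in> carrier_mat 2 2"
  shows "adj (pauli 0) * A * pauli 0 + adj (pauli 1) * A * pauli 1 + adj (pauli 2) * A * pauli 2
     + adj (pauli 3) * A * pauli 3 = (2 * (A $$ (0,0) + A $$ (1,1))) \<cdot>\<^sub>m 1\<^sub>m 2"
proof -
  have "\<i> * z * \<i> = - z" for z :: complex
    by (metis complex_i_mult_minus mult.commute mult.left_commute)
  with assms show ?thesis
    by (simp only: pauli_entries)
      (auto simp: scalar_prod_def sum_lessThan_2 less_2_cases_iff intro!: eq_matI)
qed

definition proj_one :: "complex mat" where
  "proj_one = mat_of_rows_list 2 [[0, 0], [0, 1]]"

lemma proj_one_carrier_mat: "proj_one \<in> carrier_mat 2 2"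
  by (auto simp: proj_one_def mat_of_rows_list_def)

lemma M1_eq_kron: "M1 n = kron proj_one (1\<^sub>m (2 ^ (n - 1)))"
  by (simp add: M1_def proj_one_def)

lemma unitary_conj_proj_one_diag_sum:
  assumes "unitary_mat 2 W"
  shows "(adj W * proj_one * W) $$ (0,0) + (adj W * proj_one * W) $$ (1,1) = 1"
proof -
  have W: "W \<in> carrier_mat 2 2" "W * adj W = 1\<^sub>m 2" using assms unfolding unitary_mat_def by auto
  then have "(W * adj W) $$ (1,1) = 1" by simp
  then have "W $$ (1,0) * cnj (W $$ (1,0)) + W $$ (1,1) * cnj (W $$ (1,1)) = 1"
    using W(1) by (simp add: scalar_prod_def sum_lessThan_2)
  then show ?thesis
    using W(1) by (simp add: proj_one_def mat_of_rows_list_def scalar_prod_def sum_lessThan_2 mult_ac)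
qed

lemma mval_kron_mult_mat_vec:
  assumes W1: "unitary_mat 2 W1" and W': "unitary_mat (2 ^ (n - 1)) W'"
    and P: "P \<in> carrier_mat 2 2" and V: "unitary_mat (2 ^ (n - 1)) V"
    and x: "x \<in> carrier_vec (2 * 2 ^ (n - 1))"
  shows "mval n (kron W1 W') (kron P V *\<^sub>v x)
       = Re ((kron (adj P * (adj W1 * proj_one * W1) * P) (1\<^sub>m (2 ^ (n - 1))) *\<^sub>v x) \<bullet>c x) - 1/2"
proof -
  let ?d = "2 ^ (n - 1) :: nat"
  have W1c: "W1 \<in> carrier_mat 2 2" and Vc: "V \<in> carrier_mat ?d ?d"
    using W1 V unfolding unitary_mat_def by auto
  have A: "adj W1 * proj_one * W1 \<in> carrier_mat 2 2"
    using W1c proj_one_carrier_mat by auto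
  have obs: "adj (kron W1 W') * M1 n * kron W1 W' = kron (adj W1 * proj_one * W1) (1\<^sub>m ?d)"
    unfolding M1_eq_kron by (rule kron_one_mat_conj[OF W1c W' proj_one_carrier_mat]) simp
  have "kron P V \<in> carrier_mat (2 * ?d) (2 * ?d)" using P Vc by auto
  moreover have "kron (adj W1 * proj_one * W1) (1\<^sub>m ?d) \<in> carrier_mat (2 * ?d) (2 * ?d)"
    using A by (rule kron_carrier_mat) simp
  moreover have "adj (kron P V) * kron (adj W1 * proj_one * W1) (1\<^sub>m ?d) * kron P V
      = kron (adj P * (adj W1 * proj_one * W1) * P) (1\<^sub>m ?d)"
    by (rule kron_one_mat_conj[OF P V A]) simp
  ultimately show ?thesis
    unfolding mval_def obs using x by (simp add: cscalar_prod_conjugate_observable)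
qed

lemma mval_kron_tail_invariant:
  assumes "unitary_mat 2 W1" "unitary_mat (2 ^ (n - 1)) W'"
    and "P \<in> carrier_mat 2 2" "unitary_mat (2 ^ (n - 1)) V"
    and "x \<in> carrier_vec (2 * 2 ^ (n - 1))"
  shows "mval n (kron W1 W') (kron P V *\<^sub>v x) = mval n (kron W1 W') (kron P (1\<^sub>m (2 ^ (n - 1))) *\<^sub>v x)"
  using assms by (simp add: mval_kron_mult_mat_vec unitary_mat_one)

lemma sum_mval_pauli:
  assumes W1: "unitary_mat 2 W1" and W': "unitary_mat (2 ^ (n - 1)) W'"
    and x: "x \<in> carrier_vec (2 * 2 ^ (n - 1))" and unit: "x \<bullet>c x = 1"
  shows "(\<Sum>j = 0..3. mval n (kron W1 W') (kron (pauli j) (1\<^sub>m (2 ^ (n - 1))) *\<^sub>v x)) = 0"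
proof -
  let ?d = "2 ^ (n - 1) :: nat"
  let ?A = "adj W1 * proj_one * W1"
  let ?M = "\<lambda>j. adj (pauli j) * ?A * pauli j"
  let ?Q = "\<lambda>B. (kron B (1\<^sub>m ?d) *\<^sub>v x) \<bullet>c x"
  have A: "?A \<in> carrier_mat 2 2"
    using W1 proj_one_carrier_mat unfolding unitary_mat_def by auto
  have M: "?M j \<in> carrier_mat 2 2" for j
    using A pauli_carrier_mat[of j] by auto
  have "mval n (kron W1 W') (kron (pauli j) (1\<^sub>m ?d) *\<^sub>v x) = Re (?Q (?M j)) - 1/2" for j
    by (rule mval_kron_mult_mat_vec[OF W1 W' pauli_carrier_mat unitary_mat_one x])
  moreover have "{0..3::nat} = {0, 1, 2, 3}" by auto
  ultimately have "(\<Sum>j = 0..3. mval n (kron W1 W') (kron (pauli j) (1\<^sub>m ?d) *\<^sub>v x))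
      = Re (?Q (?M 0) + ?Q (?M 1) + ?Q (?M 2) + ?Q (?M 3)) - 2"
    by simp
  also have "?Q (?M 0) + ?Q (?M 1) + ?Q (?M 2) + ?Q (?M 3) = ?Q (?M 0 + ?M 1 + ?M 2 + ?M 3)"
  proof -
    have "?M 0 + ?M 1 \<in> carrier_mat 2 2" "?M 0 + ?M 1 + ?M 2 \<in> carrier_mat 2 2"
      using M by simp_all
    then show ?thesis
      using cscalar_prod_kron_add_left[OF M M x, of 0 1] cscalar_prod_kron_add_left[OF _ M x]
      by simp
  qed
  also have "?M 0 + ?M 1 + ?M 2 + ?M 3 = 2 \<cdot>\<^sub>m 1\<^sub>m 2"
    unfolding pauli_twirl[OF A] unitary_conj_proj_one_diag_sum[OF W1] by simp
  also have "?Q (2 \<cdot>\<^sub>m 1\<^sub>m 2) = 2"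
    using cscalar_prod_kron_smult_one[OF x] unit by simp
  finally show ?thesis by simp
qed

text \<open>Indices outside \<open>{0..3}\<close> also give the identity (\<open>pauli k = 1\<^sub>m 2\<close> for \<open>k > 3\<close>).\<close>

lemma has_bochner_integral_pauli_index:
  fixes f :: "nat \<Rightarrow> real" and c :: "'w \<Rightarrow> nat"
  assumes "prob_space M" and c: "c \<in> measurable M (count_space UNIV)"
    and dist: "\<And>j. j \<in> {1, 2, 3} \<Longrightarrow> measure M {\<omega> \<in> space M. c \<omega> = j} = p"
    and f: "\<And>k. k \<notin> {1, 2, 3} \<Longrightarrow> f k = f 0"
  shows "has_bochner_integral M (\<lambda>\<omega>. f (c \<omega>)) ((1 - 4 * p) * f 0 + p * (\<Sum>j = 0..3. f j))"
proof -
  interpret prob_space M by fact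
  define S where "S j = c -` {j} \<inter> space M" for j
  have S: "S j \<in> sets M" for j
    using measurable_sets[OF c] by (simp add: S_def)
  define g where "g \<omega> = f 0 * indicator (space M) \<omega> + (\<Sum>j\<in>{1,2,3}. (f j - f 0) * indicator (S j) \<omega>)"
    for \<omega>
  have "has_bochner_integral M g (f 0 * measure M (space M) + (\<Sum>j\<in>{1,2,3}. (f j - f 0) * measure M (S j)))"
    unfolding g_def using S
    by (intro has_bochner_integral_add has_bochner_integral_sum has_bochner_integral_mult_right
        has_bochner_integral_real_indicator) (auto simp: less_top[symmetric])
  moreover have "measure M (S j) = p" if "j \<in> {1, 2, 3}" for j
    using dist[OF that] by (simp add: S_def vimage_def Int_def conj_commute)
  then have "f 0 * measure M (space M) + (\<Sum>j\<in>{1,2,3}. (f j - f 0) * measure M (S j))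
      = (1 - 4 * p) * f 0 + p * (\<Sum>j = 0..3. f j)"
    by (simp add: prob_space numeral_eq_Suc algebra_simps)
  moreover have "f (c \<omega>) = g \<omega>" if "\<omega> \<in> space M" for \<omega>
    using that f[of "c \<omega>"] by (cases "c \<omega> \<in> {1, 2, 3}") (auto simp: g_def S_def indicator_def)
  ultimately show ?thesis
    using has_bochner_integral_cong[of M M "\<lambda>\<omega>. f (c \<omega>)" g] by simp
qed

lemma convex_on_mean_of_zero_sum_ge:
  fixes L :: "real \<Rightarrow> real" and m :: "nat \<Rightarrow> real"
  assumes L: "convex_on UNIV L" and zero: "(\<Sum>j = 0..3. m j) = 0"
  shows "(L ((1/3) * \<bar>m 0\<bar>) + L (- (1/3) * \<bar>m 0\<bar>)) / 2 \<le> (1/4) * (\<Sum>j = 0..3. L (m j))"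
proof -
  have convex: "L ((1 - t) * u + t * v) \<le> (1 - t) * L u + t * L v" if "0 \<le> t" "t \<le> 1" for t u v
    using convex_onD[OF L, of t u v] that by simp
  have sum4: "(\<Sum>j = 0..3. g j) = g 0 + g 1 + g 2 + g 3" for g :: "nat \<Rightarrow> real"
    by (simp add: numeral_eq_Suc)
  \<comment> \<open>Jensen for \<open>m 1, m 2, m 3\<close>, whose mean is \<open>- m 0 / 3\<close>, then convexity between \<open>m 0\<close> and \<open>- m 0 / 3\<close>\<close>
  have "L ((m 1 + m 2) / 2) \<le> (L (m 1) + L (m 2)) / 2"
    using convex[of "1/2" "m 1" "m 2"] by (simp add: field_simps)
  moreover have "L ((1 - 1/3) * ((m 1 + m 2) / 2) + (1/3) * m 3) \<le> (1 - 1/3) * L ((m 1 + m 2) / 2) + (1/3) * L (m 3)"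
    by (rule convex) auto
  moreover have "(1 - 1/3) * ((m 1 + m 2) / 2) + (1/3) * m 3 = - m 0 / 3"
    using zero unfolding sum4 by (simp add: field_simps)
  moreover have "L ((1 - 1/2) * m 0 + (1/2) * (- m 0 / 3)) \<le> (1 - 1/2) * L (m 0) + (1/2) * L (- m 0 / 3)"
    by (rule convex) auto
  moreover have "(1 - 1/2) * m 0 + (1/2) * (- m 0 / 3) = m 0 / 3" by simp
  ultimately have "(L (m 0 / 3) + L (- m 0 / 3)) / 2 \<le> (1/4) * (\<Sum>j = 0..3. L (m j))"
    unfolding sum4 by simp
  moreover have "L ((1/3) * \<bar>m 0\<bar>) + L (- (1/3) * \<bar>m 0\<bar>) = L (m 0 / 3) + L (- m 0 / 3)"
    by (cases "m 0 \<ge> 0") simp_all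
  ultimately show ?thesis by simp
qed

lemma pauli_mean_loss_ge:
  assumes L: "convex_on UNIV L" and W1: "unitary_mat 2 W1" and W': "unitary_mat (2 ^ (n - 1)) W'"
    and x: "x \<in> carrier_vec (2 * 2 ^ (n - 1))" and unit: "x \<bullet>c x = 1" and y: "y \<in> {-1, 1}"
  shows "(L ((1/3) * \<bar>mval n (kron W1 W') x\<bar>) + L (- (1/3) * \<bar>mval n (kron W1 W') x\<bar>)) / 2
     \<le> (1/4) * (\<Sum>j = 0..3. L (mval n (kron W1 W') (kron (pauli j) (1\<^sub>m (2 ^ (n - 1))) *\<^sub>v x) * y))"
proof -
  define m where "m j = mval n (kron W1 W') (kron (pauli j) (1\<^sub>m (2 ^ (n - 1))) *\<^sub>v x) * y" for j
  have "(\<Sum>j = 0..3. m j) = 0"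
    unfolding m_def sum_distrib_right[symmetric] sum_mval_pauli[OF W1 W' x unit] by simp
  then have "(L ((1/3) * \<bar>m 0\<bar>) + L (- (1/3) * \<bar>m 0\<bar>)) / 2 \<le> (1/4) * (\<Sum>j = 0..3. L (m j))"
    by (rule convex_on_mean_of_zero_sum_ge[OF L])
  moreover have "\<bar>m 0\<bar> = \<bar>mval n (kron W1 W') x\<bar>"
    using y x by (auto simp: m_def kron_pauli_zero_mult_mat_vec)
  ultimately show ?thesis by (simp only: m_def)
qed

lemma has_bochner_integral_pauli_noisy_loss:
  assumes "prob_space M" and c: "c \<in> measurable M (count_space UNIV)"
    and dist: "\<And>j. j \<in> {1, 2, 3} \<Longrightarrow> measure M {\<omega> \<in> space M. c \<omega> = j} = p"
    and W1: "unitary_mat 2 W1" and W': "unitary_mat (2 ^ (n - 1)) W'"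
    and V: "\<And>\<omega>. \<omega> \<in> space M \<Longrightarrow> unitary_mat (2 ^ (n - 1)) (V \<omega>)"
    and x: "x \<in> carrier_vec (2 * 2 ^ (n - 1))"
  shows "has_bochner_integral M (\<lambda>\<omega>. L (mval n (kron W1 W') (kron (pauli (c \<omega>)) (V \<omega>) *\<^sub>v x) * y))
     ((1 - 4 * p) * L (mval n (kron W1 W') x * y)
      + p * (\<Sum>j = 0..3. L (mval n (kron W1 W') (kron (pauli j) (1\<^sub>m (2 ^ (n - 1))) *\<^sub>v x) * y)))"
proof -
  define f where "f j = L (mval n (kron W1 W') (kron (pauli j) (1\<^sub>m (2 ^ (n - 1))) *\<^sub>v x) * y)" for j
  have "has_bochner_integral M (\<lambda>\<omega>. f (c \<omega>)) ((1 - 4 * p) * f 0 + p * (\<Sum>j = 0..3. f j))"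
  proof (rule has_bochner_integral_pauli_index[OF assms(1) c dist])
    show "f k = f 0" if "k \<notin> {1, 2, 3}" for k
      using that by (simp add: f_def pauli_eq_one_mat)
  qed
  moreover have "f (c \<omega>) = L (mval n (kron W1 W') (kron (pauli (c \<omega>)) (V \<omega>) *\<^sub>v x) * y)"
    if "\<omega> \<in> space M" for \<omega>
    unfolding f_def using mval_kron_tail_invariant[OF W1 W' pauli_carrier_mat V[OF that] x] by simp
  moreover have "f 0 = L (mval n (kron W1 W') x * y)"
    using x by (simp add: f_def kron_pauli_zero_mult_mat_vec)
  ultimately show ?thesis
    using has_bochner_integral_cong[OF refl, of M "\<lambda>\<omega>. f (c \<omega>)"] by (simp add: f_def)
qed

lemma integral_Rhat_pauli_noise:
  assumes "prob_space M" and C: "\<And>i. i \<in> {1..N} \<Longrightarrow> C i \<in> measurable M (count_space UNIV)"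
    and dist: "\<And>i j. i \<in> {1..N} \<Longrightarrow> j \<in> {1, 2, 3} \<Longrightarrow> measure M {\<omega> \<in> space M. C i \<omega> = j} = p"
    and p: "4 * p \<noteq> 1"
    and W1: "unitary_mat 2 W1" and W': "unitary_mat (2 ^ (n - 1)) W'"
    and V: "\<And>i \<omega>. i \<in> {1..N} \<Longrightarrow> \<omega> \<in> space M \<Longrightarrow> unitary_mat (2 ^ (n - 1)) (V i \<omega>)"
    and x: "\<And>i. i \<in> {1..N} \<Longrightarrow> \<psi> i \<in> carrier_vec (2 * 2 ^ (n - 1))"
  shows "(\<integral>\<omega>. Rhat L n (kron W1 W') N (\<lambda>i. kron (pauli (C i \<omega>)) (V i \<omega>) *\<^sub>v \<psi> i) Y \<partial>M)
     = (1 - 4 * p) * (Rhat L n (kron W1 W') N \<psi> Y + 4 * p / (1 - 4 * p) * Phat L n (kron W1 W') N \<psi> Y)"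
proof -
  define R where "R = (\<Sum>i = 1..N. L (mval n (kron W1 W') (\<psi> i) * Y i))"
  define P where "P = (\<Sum>i = 1..N. \<Sum>j = 0..3.
    L (mval n (kron W1 W') (kron (pauli j) (1\<^sub>m (2 ^ (n - 1))) *\<^sub>v \<psi> i) * Y i))"
  have "has_bochner_integral M (\<lambda>\<omega>. Rhat L n (kron W1 W') N (\<lambda>i. kron (pauli (C i \<omega>)) (V i \<omega>) *\<^sub>v \<psi> i) Y)
    ((1 / real N) * (\<Sum>i = 1..N. (1 - 4 * p) * L (mval n (kron W1 W') (\<psi> i) * Y i)
      + p * (\<Sum>j = 0..3. L (mval n (kron W1 W') (kron (pauli j) (1\<^sub>m (2 ^ (n - 1))) *\<^sub>v \<psi> i) * Y i))))"
    unfolding Rhat_def using assms by (intro has_bochner_integral_mult_right has_bochner_integral_sum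
        has_bochner_integral_pauli_noisy_loss) auto
  also have "(\<Sum>i = 1..N. (1 - 4 * p) * L (mval n (kron W1 W') (\<psi> i) * Y i)
      + p * (\<Sum>j = 0..3. L (mval n (kron W1 W') (kron (pauli j) (1\<^sub>m (2 ^ (n - 1))) *\<^sub>v \<psi> i) * Y i)))
    = (1 - 4 * p) * R + p * P"
    unfolding R_def P_def by (simp add: sum.distrib sum_distrib_left)
  finally have integral: "has_bochner_integral M
      (\<lambda>\<omega>. Rhat L n (kron W1 W') N (\<lambda>i. kron (pauli (C i \<omega>)) (V i \<omega>) *\<^sub>v \<psi> i) Y)
      ((1 / real N) * ((1 - 4 * p) * R + p * P))" .
  have "(1 - 4 * p) * (4 * p / (1 - 4 * p)) = 4 * p" using p by simp
  then have lam: "(1 - 4 * p) * (X + 4 * p / (1 - 4 * p) * Z) = (1 - 4 * p) * X + 4 * p * Z" for X Z :: real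
    by (simp only: distrib_left mult.assoc[symmetric])
  have "r * ((1 - 4 * p) * R + p * P) = (1 - 4 * p) * (r * R) + 4 * p * (r * ((1/4) * P))" for r :: real
    by (simp add: algebra_simps)
  then have "(1 / real N) * ((1 - 4 * p) * R + p * P)
      = (1 - 4 * p) * (Rhat L n (kron W1 W') N \<psi> Y + 4 * p / (1 - 4 * p) * Phat L n (kron W1 W') N \<psi> Y)"
    unfolding Rhat_def Phat_def R_def[symmetric] sum_distrib_left[symmetric] P_def[symmetric] lam .
  with integral show ?thesis by (simp add: has_bochner_integral_integral_eq)
qed

lemma Phat_ge_mean_loss:
  assumes L: "convex_on UNIV L" and W1: "unitary_mat 2 W1" and W': "unitary_mat (2 ^ (n - 1)) W'"
    and x: "\<And>i. i \<in> {1..N} \<Longrightarrow> \<psi> i \<in> carrier_vec (2 * 2 ^ (n - 1)) \<and> \<psi> i \<bullet>c \<psi> i = 1"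
    and Y: "\<And>i. i \<in> {1..N} \<Longrightarrow> Y i \<in> {-1, 1}"
  shows "(1 / real N) * (\<Sum>i = 1..N. (L ((1/3) * \<bar>mval n (kron W1 W') (\<psi> i)\<bar>)
      + L (- (1/3) * \<bar>mval n (kron W1 W') (\<psi> i)\<bar>)) / 2) \<le> Phat L n (kron W1 W') N \<psi> Y"
  unfolding Phat_def using assms by (intro mult_left_mono sum_mono pauli_mean_loss_ge) auto

theorem theorem3:
  fixes M :: "'w measure" and n N :: nat and p :: real
    and \<psi> :: "nat \<Rightarrow> complex vec" and Y :: "nat \<Rightarrow> real"
    and C :: "nat \<Rightarrow> 'w \<Rightarrow> nat"
    and V :: "nat \<Rightarrow> nat \<Rightarrow> 'w \<Rightarrow> complex mat"
    and loss :: "real \<Rightarrow> real"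
    and Wc :: "nat \<Rightarrow> 'p \<Rightarrow> complex mat" and \<theta> :: 'p
  assumes n: "n \<ge> 1"
    and psi: "\<And>i. i \<in> {1..N} \<Longrightarrow> \<psi> i \<in> carrier_vec (2 ^ n) \<and> \<psi> i \<bullet>c \<psi> i = 1"
    and Y: "\<And>i. i \<in> {1..N} \<Longrightarrow> Y i \<in> {-1, 1}"
    and p: "0 \<le> p" "p < 1/4"
    and P: "prob_space M"
    and C_meas: "\<And>i. i \<in> {1..N} \<Longrightarrow> C i \<in> measurable M (count_space UNIV)"
    and C_indep: "prob_space.indep_vars M (\<lambda>_. count_space UNIV) C {1..N}"
    and C_dist0: "\<And>i. i \<in> {1..N} \<Longrightarrow> measure M {\<omega> \<in> space M. C i \<omega> = 0} = 1 - 3 * p"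
    and C_distj: "\<And>i j. i \<in> {1..N} \<Longrightarrow> j \<in> {1, 2, 3} \<Longrightarrow>
                    measure M {\<omega> \<in> space M. C i \<omega> = j} = p"
    and V_unit: "\<And>i k \<omega>. i \<in> {1..N} \<Longrightarrow> k \<in> {2..n} \<Longrightarrow> \<omega> \<in> space M \<Longrightarrow>
                    unitary_mat 2 (V i k \<omega>)"
    and W_unit: "\<And>r. r \<in> {1..n} \<Longrightarrow> unitary_mat 2 (Wc r \<theta>)"
    and l_nonneg: "\<And>x. loss x \<ge> 0"
    and l_convex: "convex_on UNIV loss"
    and l_mono: "antimono loss"
    and l_0: "loss 0 = 1"
  shows "let W = tensor_list (map (\<lambda>r. Wc r \<theta>) [1..<n+1]);
             Vt = (\<lambda>i \<omega>. tensor_list (pauli (C i \<omega>) # map (\<lambda>k. V i k \<omega>) [2..<n+1]));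
             lam = 4 * p / (1 - 4 * p)
         in (\<integral>\<omega>. Rhat loss n W N (\<lambda>i. Vt i \<omega> *\<^sub>v \<psi> i) Y \<partial>M)
              = (1 - 4 * p) * (Rhat loss n W N \<psi> Y + lam * Phat loss n W N \<psi> Y)
          \<and> Phat loss n W N \<psi> Y \<ge> (1 / real N) * (\<Sum>i = 1..N.
                (loss ((1/3) * \<bar>mval n W (\<psi> i)\<bar>) + loss (- (1/3) * \<bar>mval n W (\<psi> i)\<bar>)) / 2)"
proof -
  \<comment> \<open>Linearity of expectation makes independence of the \<open>C i\<close> unnecessary, and only convexity of
    the loss is used.\<close>
  let ?tail = "\<lambda>U. tensor_list (map U [2..<n+1])"
  have W: "tensor_list (map (\<lambda>r. Wc r \<theta>) [1..<n+1]) = kron (Wc 1 \<theta>) (?tail (\<lambda>r. Wc r \<theta>))"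
    using n by (rule tensor_list_upt_split_first)
  have Vt: "tensor_list (pauli c # map U [2..<n+1]) = kron (pauli c) (?tail U)" for c U
    by (simp add: tensor_list_def)
  have W1: "unitary_mat 2 (Wc 1 \<theta>)"
    using W_unit n by simp
  have W': "unitary_mat (2 ^ (n - 1)) (?tail (\<lambda>r. Wc r \<theta>))"
    by (rule unitary_mat_tensor_list_tail) (use W_unit in auto)
  have x: "\<psi> i \<in> carrier_vec (2 * 2 ^ (n - 1)) \<and> \<psi> i \<bullet>c \<psi> i = 1" if "i \<in> {1..N}" for i
    using psi[OF that] n by (simp add: power_eq_if)
  have "4 * p \<noteq> 1" using p by simp
  with P C_meas C_distj W_unit W1 W' V_unit x have expectation:
    "(\<integral>\<omega>. Rhat loss n (kron (Wc 1 \<theta>) (?tail (\<lambda>r. Wc r \<theta>))) N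
        (\<lambda>i. kron (pauli (C i \<omega>)) (?tail (\<lambda>k. V i k \<omega>)) *\<^sub>v \<psi> i) Y \<partial>M)
      = (1 - 4 * p) * (Rhat loss n (kron (Wc 1 \<theta>) (?tail (\<lambda>r. Wc r \<theta>))) N \<psi> Y
        + 4 * p / (1 - 4 * p) * Phat loss n (kron (Wc 1 \<theta>) (?tail (\<lambda>r. Wc r \<theta>))) N \<psi> Y)"
    by (intro integral_Rhat_pauli_noise unitary_mat_tensor_list_tail) auto
  with Phat_ge_mean_loss[OF l_convex W1 W' x Y] show ?thesis
    unfolding Let_def W Vt by simp
qed

end
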